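(* The graph property $\mathsf{NON\text{-}3\text{-}COLORABLE}$ (the complement of $3\text{-}\mathsf{COLORABLE}$) does not belong to $\mathrm{NLP}$.
   Context: Graphs. All graphs are finite, nonempty, simple, undirected and connected, and labeled: a graph is a triple $G=(V(G),E(G),\lambda_G)$ with labeling $\lambda_G:V(G)\to\{0,1\}^*$. $\mathsf{GRAPH}$ is the set of all graphs. A graph property is a subset of $\mathsf{GRAPH}$ closed under label-preserving isomorphism. $N^G_r(u)$ denotes the subgraph of $G$ induced by the nodes at distance at most $r$ from $u$. $3\text{-}\mathsf{COLORABLE}$ is the set of graphs $G$ admitting $f:V(G)\to\{0,1,2\}$ with $f(u)\ne f(v)$ for every edge $\{u,v\}$ (labels irrelevant), and $\mathsf{NON\text{-}3\text{-}COLORABLE}=\mathsf{GRAPH}\setminus3\text{-}\mathsf{COLORABLE}$. Identifiers and certificates. An identifier assignment of $G$ is a map $\mathrm{id}:V(G)\to\{0,1\}^*$; it is $r$-locally unique if $\mathrm{id}(u)\neq\mathrm{id}(v)$ for all distinct nodes $u,v$ at distance at most $2r$. Identifiers are ordered lexicographically (a proper prefix is smaller). A certificate assignment is a map $\kappa:V(G)\to\{0,1\}^*$; for $r\in\mathbb N$ and $p:\mathbb N\to\mathbb N$ it is $(r,p)$-bounded (w.r.t. $(G,\mathrm{id})$) if $|\kappa(u)|\le p\big(\sum_{v\in N^G_r(u)}(1+|\lambda_G(v)|+|\mathrm{id}(v)|)\big)$ for every node $u$. Distributed Turing machines. Such a machine $M$ is a Turing machine with three one-way-infinite tapes (receiving,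 internal, sending) over the alphabet $\{\vdash,\square,\#,0,1\}$ (left-end marker, blank, separator, bits), with designated states start, pause, stop. It is executed on a graph $G$ under an (at least $1$-locally unique) identifier assignment $\mathrm{id}$ and a certificate assignment $\kappa$: every node runs its own copy of $M$ in synchronous rounds. In each round, a node $u$ whose neighbors are $v_1,\dots,v_d$ in increasing identifier order (i) gets $m_1\#\cdots\#m_d\#$ on its receiving tape, where $m_i$ is the message sent to it by $v_i$ in the previous round (empty in the first round); (ii) its sending tape is emptied, its internal tape is initialized to $\lambda_G(u)\#\mathrm{id}(u)\#\kappa(u)$ in the first round and otherwise keeps its content, and, unless $u$ reached stop in an earlier round, $M$ runs from state start with all heads leftmost until it enters pause or stop; (iii) $u$ sends to $v_i$ the $i$-th $\#$-separated bit string on its sending tape (the empty string if there is none). The execution terminates once all nodes are in stop; $G$ is accepted, written $M(G,\mathrm{id},\kappa)\equiv\mathrm{accept}$, if at that point every node has exactly the bit string $1$ on its internal tape (symbols other than $0,1$ ignored). A local-polynomial machine is a distributed Turing machine for which there are a constant $c$ and a polynomial $q$ such that, on every graph and under all identifier and certificate assignments, all nodes reach stop within $c$ rounds, and in every round every node makes at most $q(n)$ computation steps, $n$ being the total length of its receiving- and internal-tape contents at the beginning of the round. $\mathrm{NLP}$ is the class of graph properties $P$ for which there exist a local-polynomial machine $M$, constants $r_{\mathrm{id}},r\ge 1$ and a polynomial $p$ such that for every graph $G$ and every $r_{\mathrm{id}}$-locally unique identifier assignment $\mathrm{id}$ of $G$: $G\in P\iff\exists\kappa\,:\,M(G,\mathrm{id},\kappa)\equiv\mathrm{accept}$,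 $\kappa$ ranging over $(r,p)$-bounded certificate assignments of $(G,\mathrm{id})$. *)

theory Defs
  imports Main "HOL-Computational_Algebra.Polynomial"
begin

text \<open>Bit strings are bool lists (False = 0, True = 1).  Vertices are natural numbers
(every finite graph is isomorphic to one on natural numbers).\<close>

type_synonym bits = "bool list"

record graph =
  verts :: "nat set"
  edges :: "nat set set"
  label :: "nat \<Rightarrow> bits"

definition adj :: "graph \<Rightarrow> nat \<Rightarrow> nat \<Rightarrow> bool" where
  "adj G u v \<longleftrightarrow> {u, v} \<in> edges G"

definition walk :: "graph \<Rightarrow> nat list \<Rightarrow> bool" where
  "walk G xs \<longleftrightarrow> xs \<noteq> [] \<and> set xs \<subseteq> verts G \<and>
     (\<forall>i. Suc i < length xs \<longrightarrow> adj G (xs ! i) (xs ! Suc i))"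

definition dist_le :: "graph \<Rightarrow> nat \<Rightarrow> nat \<Rightarrow> nat \<Rightarrow> bool" where
  "dist_le G k u v \<longleftrightarrow> (\<exists>xs. walk G xs \<and> hd xs = u \<and> last xs = v \<and> length xs \<le> Suc k)"

definition is_graph :: "graph \<Rightarrow> bool" where
  "is_graph G \<longleftrightarrow> finite (verts G) \<and> verts G \<noteq> {} \<and>
     (\<forall>e\<in>edges G. \<exists>u v. u \<in> verts G \<and> v \<in> verts G \<and> u \<noteq> v \<and> e = {u, v}) \<and>
     (\<forall>u\<in>verts G. \<forall>v\<in>verts G. \<exists>xs. walk G xs \<and> hd xs = u \<and> last xs = v)"

definition GRAPH :: "graph set" where
  "GRAPH = {G. is_graph G}"

definition graph_iso :: "graph \<Rightarrow> graph \<Rightarrow> bool" where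
  "graph_iso G H \<longleftrightarrow> (\<exists>f. bij_betw f (verts G) (verts H) \<and>
     (\<forall>u\<in>verts G. \<forall>v\<in>verts G. {u, v} \<in> edges G \<longleftrightarrow> {f u, f v} \<in> edges H) \<and>
     (\<forall>u\<in>verts G. label H (f u) = label G u))"

definition graph_property :: "graph set \<Rightarrow> bool" where
  "graph_property P \<longleftrightarrow> P \<subseteq> GRAPH \<and>
     (\<forall>G H. G \<in> P \<and> H \<in> GRAPH \<and> graph_iso G H \<longrightarrow> H \<in> P)"

definition THREE_COLORABLE :: "graph set" where
  "THREE_COLORABLE = {G \<in> GRAPH. \<exists>f :: nat \<Rightarrow> nat.
     (\<forall>u\<in>verts G. f u \<in> {0, 1, 2}) \<and> (\<forall>u v. {u, v} \<in> edges G \<longrightarrow> f u \<noteq> f v)}"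

definition NON_THREE_COLORABLE :: "graph set" where
  "NON_THREE_COLORABLE = GRAPH - THREE_COLORABLE"

definition locally_unique :: "graph \<Rightarrow> nat \<Rightarrow> (nat \<Rightarrow> bits) \<Rightarrow> bool" where
  "locally_unique G r idf \<longleftrightarrow> (\<forall>u\<in>verts G. \<forall>v\<in>verts G.
     u \<noteq> v \<and> dist_le G (2 * r) u v \<longrightarrow> idf u \<noteq> idf v)"

text \<open>Lexicographic order on bit strings, a proper prefix being smaller.\<close>
definition id_less :: "bits \<Rightarrow> bits \<Rightarrow> bool" where
  "id_less a b \<longleftrightarrow> (a, b) \<in> lexord {(x, y). x < y}"

definition bounded_cert :: "graph \<Rightarrow> (nat \<Rightarrow> bits) \<Rightarrow> nat \<Rightarrow> nat poly \<Rightarrow> (nat \<Rightarrow> bits) \<Rightarrow> bool" where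
  "bounded_cert G idf r p \<kappa> \<longleftrightarrow> (\<forall>u\<in>verts G.
     length (\<kappa> u) \<le> poly p (\<Sum>v\<in>{v\<in>verts G. dist_le G r u v}.
        1 + length (label G v) + length (idf v)))"

datatype sym = LEnd | Blank | Sep | Zero | One

datatype move = MvL | MvS | MvR

type_synonym tape = "nat \<Rightarrow> sym"

record dtm =
  states :: "nat set"
  delta :: "nat \<Rightarrow> sym \<Rightarrow> sym \<Rightarrow> sym \<Rightarrow> nat \<times> sym \<times> sym \<times> sym \<times> move \<times> move \<times> move"
  start :: nat
  pause :: nat
  stop :: nat

definition wf_dtm :: "dtm \<Rightarrow> bool" where
  "wf_dtm M \<longleftrightarrow> finite (states M) \<and> start M \<in> states M \<and> pause M \<in> states M \<and>
     stop M \<in> states M \<and> start M \<noteq> pause M \<and> start M \<noteq> stop M \<and> pause M \<noteq> stop M \<and>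
     (\<forall>q\<in>states M. \<forall>a b c. fst (delta M q a b c) \<in> states M)"

definition bit_sym :: "bool \<Rightarrow> sym" where
  "bit_sym b = (if b then One else Zero)"

definition enc :: "bits \<Rightarrow> sym list" where
  "enc w = map bit_sym w"

fun bits_of :: "sym list \<Rightarrow> bits" where
  "bits_of [] = []"
| "bits_of (x # xs) = (if x = Zero then False # bits_of xs
                       else if x = One then True # bits_of xs else bits_of xs)"

definition tape_of :: "sym list \<Rightarrow> tape" where
  "tape_of w = (\<lambda>i. if i = 0 then LEnd else if i \<le> length w then w ! (i - 1) else Blank)"

definition tape_len :: "tape \<Rightarrow> nat" where
  "tape_len t = Max {i. t i \<noteq> Blank}"

definition content :: "tape \<Rightarrow> sym list" where
  "content t = map t [1..<Suc (tape_len t)]"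

fun split_sep :: "sym list \<Rightarrow> sym list list" where
  "split_sep [] = [[]]"
| "split_sep (x # xs) = (let r = split_sep xs in
     if x = Sep then [] # r else (x # hd r) # tl r)"

record cfg =
  cst :: nat
  rtape :: tape
  itape :: tape
  stape :: tape
  rhd :: nat
  ihd :: nat
  shd :: nat

definition write_cell :: "tape \<Rightarrow> nat \<Rightarrow> sym \<Rightarrow> tape" where
  "write_cell t h s = (if h = 0 then t else t(h := s))"

fun mv :: "move \<Rightarrow> nat \<Rightarrow> nat" where
  "mv MvL h = h - 1"
| "mv MvS h = h"
| "mv MvR h = Suc h"

definition step :: "dtm \<Rightarrow> cfg \<Rightarrow> cfg" where
  "step M c = (case delta M (cst c) (rtape c (rhd c)) (itape c (ihd c)) (stape c (shd c)) of
     (q', a, b, d, m1, m2, m3) \<Rightarrow>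
       \<lparr>cst = q', rtape = write_cell (rtape c) (rhd c) a,
        itape = write_cell (itape c) (ihd c) b, stape = write_cell (stape c) (shd c) d,
        rhd = mv m1 (rhd c), ihd = mv m2 (ihd c), shd = mv m3 (shd c)\<rparr>)"

definition halts_in :: "dtm \<Rightarrow> cfg \<Rightarrow> nat \<Rightarrow> cfg \<Rightarrow> bool" where
  "halts_in M c n c' \<longleftrightarrow> (step M ^^ n) c = c' \<and> cst c' \<in> {pause M, stop M} \<and>
     (\<forall>m<n. cst ((step M ^^ m) c) \<notin> {pause M, stop M})"

definition run_round :: "dtm \<Rightarrow> cfg \<Rightarrow> cfg option" where
  "run_round M c = (if \<exists>n c'. halts_in M c n c'
     then Some (THE c'. \<exists>n. halts_in M c n c') else None)"

definition nbr_list :: "graph \<Rightarrow> (nat \<Rightarrow> bits) \<Rightarrow> nat \<Rightarrow> nat list" where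
  "nbr_list G idf u = (THE ns. distinct ns \<and> set ns = {v\<in>verts G. adj G u v} \<and>
     sorted_wrt (\<lambda>a b. id_less (idf a) (idf b)) ns)"

text \<open>Node state between rounds: (has stopped, internal tape, sending tape).\<close>
type_synonym nstate = "bool \<times> tape \<times> tape"

definition message :: "graph \<Rightarrow> (nat \<Rightarrow> bits) \<Rightarrow> nat \<Rightarrow> tape \<Rightarrow> nat \<Rightarrow> bits" where
  "message G idf v s u = (let ns = nbr_list G idf v; ps = split_sep (content s);
       i = (THE i. i < length ns \<and> ns ! i = u)
     in if i < length ps then bits_of (ps ! i) else [])"

definition received :: "graph \<Rightarrow> (nat \<Rightarrow> bits) \<Rightarrow> (nat \<Rightarrow> nstate) \<Rightarrow> nat \<Rightarrow> sym list" where
  "received G idf S u = concat (map (\<lambda>v. enc (message G idf v (snd (snd (S v))) u) @ [Sep])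
     (nbr_list G idf u))"

definition empty_tape :: tape where
  "empty_tape = tape_of []"

definition round_cfg :: "dtm \<Rightarrow> graph \<Rightarrow> (nat \<Rightarrow> bits) \<Rightarrow> (nat \<Rightarrow> nstate) \<Rightarrow> nat \<Rightarrow> cfg" where
  "round_cfg M G idf S u = \<lparr>cst = start M, rtape = tape_of (received G idf S u),
     itape = fst (snd (S u)), stape = empty_tape, rhd = 0, ihd = 0, shd = 0\<rparr>"

definition node_round :: "dtm \<Rightarrow> graph \<Rightarrow> (nat \<Rightarrow> bits) \<Rightarrow> (nat \<Rightarrow> nstate) \<Rightarrow> nat \<Rightarrow> nstate option" where
  "node_round M G idf S u = (if fst (S u) then Some (True, fst (snd (S u)), empty_tape)
     else map_option (\<lambda>c'. (cst c' = stop M, itape c', stape c')) (run_round M (round_cfg M G idf S u)))"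

definition init_state :: "graph \<Rightarrow> (nat \<Rightarrow> bits) \<Rightarrow> (nat \<Rightarrow> bits) \<Rightarrow> nat \<Rightarrow> nstate" where
  "init_state G idf \<kappa> u = (False,
     tape_of (enc (label G u) @ [Sep] @ enc (idf u) @ [Sep] @ enc (\<kappa> u)), empty_tape)"

text \<open>Global state after k rounds (None if some node's computation in some round never
reaches pause or stop).\<close>
fun exec :: "dtm \<Rightarrow> graph \<Rightarrow> (nat \<Rightarrow> bits) \<Rightarrow> (nat \<Rightarrow> bits) \<Rightarrow> nat \<Rightarrow> (nat \<Rightarrow> nstate) option" where
  "exec M G idf \<kappa> 0 = Some (init_state G idf \<kappa>)"
| "exec M G idf \<kappa> (Suc k) = (case exec M G idf \<kappa> k of None \<Rightarrow> None
     | Some S \<Rightarrow> if (\<forall>u\<in>verts G. node_round M G idf S u \<noteq> None)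
         then Some (\<lambda>u. if u \<in> verts G then the (node_round M G idf S u) else S u)
         else None)"

definition accepts :: "dtm \<Rightarrow> graph \<Rightarrow> (nat \<Rightarrow> bits) \<Rightarrow> (nat \<Rightarrow> bits) \<Rightarrow> bool" where
  "accepts M G idf \<kappa> \<longleftrightarrow> (\<exists>k S. exec M G idf \<kappa> k = Some S \<and>
     (\<forall>u\<in>verts G. fst (S u)) \<and>
     (\<forall>u\<in>verts G. bits_of (content (fst (snd (S u)))) = [True]))"

definition local_polynomial :: "dtm \<Rightarrow> bool" where
  "local_polynomial M \<longleftrightarrow> wf_dtm M \<and> (\<exists>(c::nat) (q::nat poly). \<forall>G idf \<kappa>.
     is_graph G \<and> locally_unique G 1 idf \<longrightarrow>
       (\<exists>S. exec M G idf \<kappa> c = Some S \<and> (\<forall>u\<in>verts G. fst (S u))) \<and>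
       (\<forall>k S. exec M G idf \<kappa> k = Some S \<longrightarrow> (\<forall>u\<in>verts G. \<not> fst (S u) \<longrightarrow>
          (\<exists>n c'. halts_in M (round_cfg M G idf S u) n c' \<and>
             n \<le> poly q (length (received G idf S u) + tape_len (fst (snd (S u))))))))"

definition NLP :: "graph set set" where
  "NLP = {P. graph_property P \<and> (\<exists>M r_id r (p::nat poly). local_polynomial M \<and>
     r_id \<ge> 1 \<and> r \<ge> 1 \<and> (\<forall>G idf. is_graph G \<and> locally_unique G r_id idf \<longrightarrow>
       (G \<in> P \<longleftrightarrow> (\<exists>\<kappa>. bounded_cert G idf r p \<kappa> \<and> accepts M G idf \<kappa>))))}"

end

theory Submission
  imports Defs "HOL-Number_Theory.Cong"
begin

text \<open>What a node of a distributed machine computes depends only on what it receives, so acceptance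
  is preserved when graph, identifiers and certificates are lifted along a covering map; the lifted
  certificates stay polynomially bounded because balls of the cover map onto balls of the base, and
  the lifted identifiers stay locally unique when the fibres are far apart.  The square of a cycle
  of length \<open>n = 3k + 1\<close> is not 3-colourable, while its triple cover, the square of the cycle of
  length \<open>3n\<close>, is.  An NLP verifier for non-3-colourability accepting the former (for \<open>n\<close> large
  compared with the identifier radius) would therefore also accept the latter.\<close>

section \<open>Walks\<close>

lemma adj_sym: "adj G x y \<Longrightarrow> adj G y x"
  by (simp add: adj_def insert_commute)

lemma walk_Cons_Cons: "walk G (x # y # zs) \<longleftrightarrow> x \<in> verts G \<and> adj G x y \<and> walk G (y # zs)"
proof
  assume w: "walk G (x # y # zs)"
  have a: "adj G ((x # y # zs) ! i) ((x # y # zs) ! Suc i)" if "Suc i < length (x # y # zs)" for i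
    using w that unfolding walk_def by blast
  show "x \<in> verts G \<and> adj G x y \<and> walk G (y # zs)"
  proof (intro conjI)
    show "x \<in> verts G" using w by (simp add: walk_def)
    show "adj G x y" using a[of 0] by simp
    show "walk G (y # zs)" unfolding walk_def
    proof (intro conjI allI impI)
      show "set (y # zs) \<subseteq> verts G" using w by (simp add: walk_def)
      fix i assume "Suc i < length (y # zs)"
      then show "adj G ((y # zs) ! i) ((y # zs) ! Suc i)" using a[of "Suc i"] by simp
    qed simp
  qed
next
  assume h: "x \<in> verts G \<and> adj G x y \<and> walk G (y # zs)"
  show "walk G (x # y # zs)" unfolding walk_def
  proof (intro conjI allI impI)
    show "set (x # y # zs) \<subseteq> verts G" using h by (auto simp: walk_def)
    fix i assume i: "Suc i < length (x # y # zs)"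
    show "adj G ((x # y # zs) ! i) ((x # y # zs) ! Suc i)"
    proof (cases i)
      case 0 then show ?thesis using h by simp
    next
      case (Suc j) then show ?thesis using h i unfolding walk_def by simp
    qed
  qed simp
qed

lemma walk_rev: assumes "walk G xs" shows "walk G (rev xs)"
  unfolding walk_def
proof (intro conjI allI impI)
  show "rev xs \<noteq> []" "set (rev xs) \<subseteq> verts G" using assms by (auto simp: walk_def)
  fix i assume i: "Suc i < length (rev xs)"
  define j where "j = length xs - 2 - i"
  have "Suc j < length xs" "rev xs ! i = xs ! Suc j" "rev xs ! Suc i = xs ! j"
    using i by (auto simp: j_def rev_nth Suc_diff_Suc numeral_2_eq_2)
  with assms show "adj G (rev xs ! i) (rev xs ! Suc i)"
    unfolding walk_def by (simp add: adj_sym)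
qed

lemma walk_upt:
  assumes "a \<le> b" "{a..b} \<subseteq> verts G" "\<And>i. a \<le> i \<Longrightarrow> i < b \<Longrightarrow> adj G i (Suc i)"
  shows "walk G [a..<Suc b]"
  unfolding walk_def using assms by (auto simp del: upt_Suc simp: nth_upt)

section \<open>Covering maps preserve acceptance\<close>

definition unary_id :: "nat \<Rightarrow> bits" where
  "unary_id g = replicate g True"

lemma id_less_unary_id_iff [simp]: "id_less (unary_id a) (unary_id b) \<longleftrightarrow> a < b"
  unfolding id_less_def unary_id_def
proof (induction a arbitrary: b)
  case 0 then show ?case by (cases b) auto
next
  case (Suc a) then show ?case by (cases b) auto
qed

lemma unary_id_eq_iff [simp]: "unary_id a = unary_id b \<longleftrightarrow> a = b"
  by (simp add: unary_id_def)

lemma sorted_wrt_key_unique: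
  fixes f :: "'a \<Rightarrow> 'b::linorder"
  assumes "sorted_wrt (\<lambda>a b. f a < f b) xs" "sorted_wrt (\<lambda>a b. f a < f b) ys" "set xs = set ys"
  shows "xs = ys"
proof -
  have sorted: "sorted_wrt (<) (map f xs)" "sorted_wrt (<) (map f ys)"
    using assms(1,2) by (simp_all add: sorted_wrt_map)
  then have "map f xs = map f ys" using assms(3) by (intro strict_sorted_equal) auto
  moreover have "inj_on f (set xs)" using sorted(1) by (simp add: strict_sorted_iff distinct_map)
  ultimately show ?thesis using assms(3) by (simp add: inj_on_map_eq_map)
qed

lemma sorted_wrt_key_exists:
  fixes f :: "'a \<Rightarrow> 'b::linorder"
  assumes "finite A" "inj_on f A"
  shows "\<exists>xs. distinct xs \<and> set xs = A \<and> sorted_wrt (\<lambda>a b. f a < f b) xs"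
proof -
  define ys where "ys = sorted_list_of_set (f ` A)"
  define g where "g = the_inv_into A f"
  have ys: "sorted_wrt (<) ys" "distinct ys" "set ys = f ` A"
    using assms(1) by (simp_all add: ys_def strict_sorted_list_of_set)
  have fg: "f (g a) = a" if "a \<in> f ` A" for a
    using that assms(2) by (simp add: g_def f_the_inv_into_f)
  have "distinct (map g ys)" using ys(2,3) assms(2) by (simp add: distinct_map g_def inj_on_the_inv_into)
  moreover have "set (map g ys) = A" using ys(3) assms(2) by (simp add: g_def image_image the_inv_into_f_f)
  moreover have "sorted_wrt (\<lambda>a b. f a < f b) (map g ys)"
    unfolding sorted_wrt_map by (rule sorted_wrt_mono_rel[OF _ ys(1)]) (simp add: fg ys(3))
  ultimately show ?thesis by blast
qed

lemma nbr_list_sorted_by_key: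
  fixes f :: "nat \<Rightarrow> nat"
  assumes "finite (verts X)" "inj_on f {v \<in> verts X. adj X x v}"
    "\<And>a b. id_less (idX a) (idX b) \<longleftrightarrow> f a < f b"
  shows "distinct (nbr_list X idX x) \<and> set (nbr_list X idX x) = {v \<in> verts X. adj X x v} \<and>
     sorted_wrt (\<lambda>a b. f a < f b) (nbr_list X idX x)"
proof -
  let ?P = "\<lambda>ns. distinct ns \<and> set ns = {v \<in> verts X. adj X x v} \<and> sorted_wrt (\<lambda>a b. f a < f b) ns"
  have "nbr_list X idX x = (THE ns. ?P ns)" unfolding nbr_list_def assms(3) ..
  moreover obtain ns where ns: "?P ns" using sorted_wrt_key_exists[OF _ assms(2)] assms(1) by auto
  then have "?P (THE ns. ?P ns)" by (rule theI[of ?P ns]) (use ns sorted_wrt_key_unique in blast)+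
  ultimately show ?thesis by simp
qed

lemma the_index_nth: "distinct xs \<Longrightarrow> i < length xs \<Longrightarrow> (THE j. j < length xs \<and> xs ! j = xs ! i) = i"
  by (intro the_equality) (auto simp: nth_eq_iff_index_eq)

lemma poly_mono_nat: "(x::nat) \<le> y \<Longrightarrow> poly p x \<le> poly p y"
proof (induction p rule: pCons_induct)
  case (pCons a p)
  then have "x * poly p x \<le> y * poly p y" by (intro mult_mono) auto
  then show ?case by simp
qed simp

text \<open>\<open>\<pi>\<close> need not be surjective.  Running \<open>G\<close> under unary identifiers and \<open>H\<close> under the
  lifted ones, every node of \<open>H\<close> sees in each round exactly what its image in \<open>G\<close> sees.\<close>

locale covering =
  fixes G H :: graph and \<pi> :: "nat \<Rightarrow> nat"
  assumes finite_G: "finite (verts G)" and finite_H: "finite (verts H)"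
    and cover_verts: "\<And>u. u \<in> verts H \<Longrightarrow> \<pi> u \<in> verts G"
    and cover_nbhd: "\<And>u. u \<in> verts H \<Longrightarrow>
      bij_betw \<pi> {v \<in> verts H. adj H u v} {w \<in> verts G. adj G (\<pi> u) w}"
    and cover_label: "\<And>u. u \<in> verts H \<Longrightarrow> label H u = label G (\<pi> u)"
begin

abbreviation lifted_id :: "nat \<Rightarrow> bits" where
  "lifted_id u \<equiv> unary_id (\<pi> u)"

lemma nbr_list_G:
  "distinct (nbr_list G unary_id g) \<and> set (nbr_list G unary_id g) = {v \<in> verts G. adj G g v} \<and>
     sorted_wrt (\<lambda>a b. id a < id b) (nbr_list G unary_id g)"
  by (rule nbr_list_sorted_by_key[OF finite_G]) auto

lemma nbr_list_H:
  assumes "u \<in> verts H"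
  shows "distinct (nbr_list H lifted_id u) \<and> set (nbr_list H lifted_id u) = {v \<in> verts H. adj H u v} \<and>
     map \<pi> (nbr_list H lifted_id u) = nbr_list G unary_id (\<pi> u)"
proof -
  have "inj_on \<pi> {v \<in> verts H. adj H u v}" using cover_nbhd[OF assms] by (simp add: bij_betw_def)
  then have H: "distinct (nbr_list H lifted_id u) \<and> set (nbr_list H lifted_id u) = {v \<in> verts H. adj H u v} \<and>
     sorted_wrt (\<lambda>a b. \<pi> a < \<pi> b) (nbr_list H lifted_id u)"
    by (rule nbr_list_sorted_by_key[OF finite_H]) simp
  then have "sorted_wrt (\<lambda>a b. id a < id b) (map \<pi> (nbr_list H lifted_id u))"
    by (simp add: sorted_wrt_map)
  moreover have "set (map \<pi> (nbr_list H lifted_id u)) = set (nbr_list G unary_id (\<pi> u))"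
    using H nbr_list_G cover_nbhd[OF assms] by (simp add: bij_betw_def)
  ultimately have "map \<pi> (nbr_list H lifted_id u) = nbr_list G unary_id (\<pi> u)"
    using nbr_list_G[of "\<pi> u"] by (intro sorted_wrt_key_unique[where f = "id :: nat \<Rightarrow> nat"]) simp_all
  with H show ?thesis by simp
qed

lemma message_lift:
  assumes "v \<in> verts H" "u \<in> verts H" "adj H v u"
  shows "message H lifted_id v s u = message G unary_id (\<pi> v) s (\<pi> u)"
proof -
  let ?ns = "nbr_list H lifted_id v"
  have ns: "distinct ?ns" "set ?ns = {w \<in> verts H. adj H v w}" "map \<pi> ?ns = nbr_list G unary_id (\<pi> v)"
    using nbr_list_H[OF assms(1)] by auto
  have "distinct (map \<pi> ?ns)" using ns(3) nbr_list_G by metis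
  moreover obtain i where i: "i < length ?ns" "?ns ! i = u"
    using ns(2) assms by (metis (mono_tags, lifting) in_set_conv_nth mem_Collect_eq)
  ultimately have index_H: "(THE j. j < length ?ns \<and> ?ns ! j = u) = i"
    and index_G: "(THE j. j < length (map \<pi> ?ns) \<and> map \<pi> ?ns ! j = \<pi> u) = i"
    using the_index_nth[OF ns(1) i(1)] the_index_nth[of "map \<pi> ?ns" i] by auto
  show ?thesis unfolding message_def Let_def ns(3)[symmetric] index_H index_G ..
qed

lemma received_lift:
  assumes "u \<in> verts H" "\<forall>v\<in>verts H. adj H u v \<longrightarrow> SH v = S (\<pi> v)"
  shows "received H lifted_id SH u = received G unary_id S (\<pi> u)"
proof -
  let ?ns = "nbr_list H lifted_id u"
  have ns: "set ?ns = {w \<in> verts H. adj H u w}" "map \<pi> ?ns = nbr_list G unary_id (\<pi> u)"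
    using nbr_list_H[OF assms(1)] by auto
  have "map (\<lambda>v. enc (message H lifted_id v (snd (snd (SH v))) u) @ [Sep]) ?ns =
        map ((\<lambda>w. enc (message G unary_id w (snd (snd (S w))) (\<pi> u)) @ [Sep]) \<circ> \<pi>) ?ns"
  proof (rule map_cong[OF refl])
    fix v assume "v \<in> set ?ns"
    then have v: "v \<in> verts H" "adj H u v" using ns(1) by auto
    then show "enc (message H lifted_id v (snd (snd (SH v))) u) @ [Sep] =
        ((\<lambda>w. enc (message G unary_id w (snd (snd (S w))) (\<pi> u)) @ [Sep]) \<circ> \<pi>) v"
      using message_lift[OF v(1) assms(1) adj_sym[OF v(2)]] assms(2) by simp
  qed
  then show ?thesis by (simp only: received_def ns(2)[symmetric] map_map)
qed

lemma node_round_lift: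
  assumes "u \<in> verts H" "SH u = S (\<pi> u)" "\<forall>v\<in>verts H. adj H u v \<longrightarrow> SH v = S (\<pi> v)"
  shows "node_round M H lifted_id SH u = node_round M G unary_id S (\<pi> u)"
  unfolding node_round_def round_cfg_def received_lift[OF assms(1,3)] assms(2) ..

lemma exec_lift:
  "exec M G unary_id \<kappa> k = Some S \<Longrightarrow>
    \<exists>SH. exec M H lifted_id (\<lambda>u. \<kappa> (\<pi> u)) k = Some SH \<and> (\<forall>u\<in>verts H. SH u = S (\<pi> u))"
proof (induction k arbitrary: S)
  case 0 then show ?case by (auto simp: init_state_def cover_label)
next
  case (Suc k)
  obtain S0 where S0: "exec M G unary_id \<kappa> k = Some S0"
    using Suc.prems by (cases "exec M G unary_id \<kappa> k") auto
  have defined: "\<forall>g\<in>verts G. node_round M G unary_id S0 g \<noteq> None"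
    and S: "S = (\<lambda>g. if g \<in> verts G then the (node_round M G unary_id S0 g) else S0 g)"
    using Suc.prems S0 by (auto split: if_splits)
  obtain SH0 where SH0: "exec M H lifted_id (\<lambda>u. \<kappa> (\<pi> u)) k = Some SH0" "\<forall>u\<in>verts H. SH0 u = S0 (\<pi> u)"
    using Suc.IH[OF S0] by blast
  have round: "node_round M H lifted_id SH0 u = node_round M G unary_id S0 (\<pi> u)" if "u \<in> verts H" for u
    using node_round_lift[OF that] SH0(2) that by blast
  then have "exec M H lifted_id (\<lambda>u. \<kappa> (\<pi> u)) (Suc k) =
      Some (\<lambda>u. if u \<in> verts H then the (node_round M H lifted_id SH0 u) else SH0 u)"
    using SH0(1) defined cover_verts by simp
  moreover have "\<forall>u\<in>verts H. the (node_round M H lifted_id SH0 u) = S (\<pi> u)"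
    using round cover_verts S by simp
  ultimately show ?case by auto
qed

lemma accepts_lift: "accepts M G unary_id \<kappa> \<Longrightarrow> accepts M H lifted_id (\<lambda>u. \<kappa> (\<pi> u))"
  unfolding accepts_def using exec_lift cover_verts by fastforce

lemma walk_lift:
  "walk G xs \<Longrightarrow> hd xs = \<pi> u \<Longrightarrow> u \<in> verts H \<Longrightarrow> \<exists>ys. walk H ys \<and> hd ys = u \<and> map \<pi> ys = xs"
proof (induction xs arbitrary: u rule: induct_list012)
  case 1 then show ?case by (simp add: walk_def)
next
  case (2 x) then show ?case by (intro exI[of _ "[u]"]) (simp add: walk_def)
next
  case (3 x y zs)
  have w: "adj G x y" "walk G (y # zs)" using "3.prems"(1) by (simp_all add: walk_Cons_Cons)
  then have "y \<in> {w \<in> verts G. adj G (\<pi> u) w}" using "3.prems"(2) by (simp add: walk_def)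
  then have "y \<in> \<pi> ` {v \<in> verts H. adj H u v}"
    using bij_betw_imp_surj_on[OF cover_nbhd[OF "3.prems"(3)]] by simp
  then obtain v where v: "v \<in> verts H" "adj H u v" "\<pi> v = y" by blast
  have "hd (y # zs) = \<pi> v" using v(3) by simp
  then have "\<exists>ys. walk H ys \<and> hd ys = v \<and> map \<pi> ys = y # zs" by (rule "3.IH"(2)[OF w(2) _ v(1)])
  then obtain ys where "walk H ys \<and> hd ys = v \<and> map \<pi> ys = y # zs" ..
  then have ys: "walk H ys" "hd ys = v" "map \<pi> ys = y # zs" by simp_all
  then obtain rest where rest: "ys = v # rest" by (cases ys) auto
  have "walk H (u # v # rest)" unfolding walk_Cons_Cons using rest ys(1) v(2) "3.prems"(3) by simp
  moreover have "map \<pi> (u # v # rest) = x # y # zs" using rest ys(3) "3.prems"(2) by simp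
  ultimately show ?case by (intro exI[of _ "u # v # rest"]) simp
qed

lemma dist_le_lift:
  assumes "u \<in> verts H" "dist_le G r (\<pi> u) g"
  shows "\<exists>v\<in>verts H. dist_le H r u v \<and> \<pi> v = g"
proof -
  obtain xs where xs: "walk G xs" "hd xs = \<pi> u" "last xs = g" "length xs \<le> Suc r"
    using assms(2) unfolding dist_le_def by blast
  obtain ys where ys: "walk H ys" "hd ys = u" "map \<pi> ys = xs"
    using walk_lift[OF xs(1,2) assms(1)] by blast
  then have "ys \<noteq> []" "last ys \<in> verts H" by (auto simp: walk_def)
  moreover have "\<pi> (last ys) = g" "length ys \<le> Suc r"
    using ys(3) xs(3,4) \<open>ys \<noteq> []\<close> by (auto simp: last_map)
  ultimately show ?thesis using ys(1,2) unfolding dist_le_def by blast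
qed

lemma bounded_cert_lift:
  assumes "bounded_cert G unary_id r p \<kappa>"
  shows "bounded_cert H lifted_id r p (\<lambda>u. \<kappa> (\<pi> u))"
  unfolding bounded_cert_def
proof
  fix u assume u: "u \<in> verts H"
  let ?w = "\<lambda>g. 1 + length (label G g) + length (unary_id g)"
  let ?BG = "{v \<in> verts G. dist_le G r (\<pi> u) v}"
  let ?BH = "{v \<in> verts H. dist_le H r u v}"
  have finite_BH: "finite ?BH" using finite_H by simp
  have "?BG \<subseteq> \<pi> ` ?BH" using dist_le_lift[OF u] by fastforce
  then have "sum ?w ?BG \<le> sum ?w (\<pi> ` ?BH)" using finite_BH by (intro sum_mono2) auto
  also have "\<dots> \<le> sum (?w \<circ> \<pi>) ?BH" using finite_BH by (intro sum_image_le) auto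
  also have "\<dots> = (\<Sum>v\<in>?BH. 1 + length (label H v) + length (lifted_id v))"
    using cover_label by (intro sum.cong) auto
  finally have "poly p (sum ?w ?BG) \<le> poly p (\<Sum>v\<in>?BH. 1 + length (label H v) + length (lifted_id v))"
    by (rule poly_mono_nat)
  moreover have "length (\<kappa> (\<pi> u)) \<le> poly p (sum ?w ?BG)"
    using assms cover_verts[OF u] unfolding bounded_cert_def by blast
  ultimately show "length (\<kappa> (\<pi> u)) \<le> poly p (\<Sum>v\<in>?BH. 1 + length (label H v) + length (lifted_id v))"
    by simp
qed

end

lemma NLP_closed_under_coverings:
  assumes "P \<in> NLP"
  obtains r_id where "\<And>G H \<pi>. covering G H \<pi> \<Longrightarrow> is_graph G \<Longrightarrow> is_graph H \<Longrightarrow> G \<in> P \<Longrightarrow>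
    locally_unique H r_id (\<lambda>u. unary_id (\<pi> u)) \<Longrightarrow> H \<in> P"
proof -
  obtain M r_id r p where decides: "\<And>G idf. is_graph G \<Longrightarrow> locally_unique G r_id idf \<Longrightarrow>
      G \<in> P \<longleftrightarrow> (\<exists>\<kappa>. bounded_cert G idf r p \<kappa> \<and> accepts M G idf \<kappa>)"
    using assms unfolding NLP_def by blast
  have "H \<in> P" if cov: "covering G H \<pi>" and "is_graph G" "is_graph H" "G \<in> P"
    and unique_H: "locally_unique H r_id (\<lambda>u. unary_id (\<pi> u))" for G H \<pi>
  proof -
    interpret covering G H \<pi> by (fact cov)
    have "locally_unique G r_id unary_id" by (simp add: locally_unique_def)
    then obtain \<kappa> where "bounded_cert G unary_id r p \<kappa>" "accepts M G unary_id \<kappa>"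
      using decides \<open>is_graph G\<close> \<open>G \<in> P\<close> by blast
    then show "H \<in> P"
      using decides[OF \<open>is_graph H\<close> unique_H] bounded_cert_lift accepts_lift by blast
  qed
  then show thesis by (rule that)
qed

section \<open>Squares of cycles\<close>

definition cycle_square :: "nat \<Rightarrow> graph" where
  "cycle_square m = \<lparr>verts = {..<m}, edges = {{u, (u + d) mod m} | u d. u < m \<and> d \<in> {1, 2}},
     label = (\<lambda>_. [])\<rparr>"

lemma verts_cycle_square [simp]: "verts (cycle_square m) = {..<m}"
  and label_cycle_square [simp]: "label (cycle_square m) = (\<lambda>_. [])"
  by (simp_all add: cycle_square_def)

lemma cycle_square_edge: "u < m \<Longrightarrow> d \<in> {1, 2} \<Longrightarrow> {u, (u + d) mod m} \<in> edges (cycle_square m)"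
  by (auto simp: cycle_square_def)

lemma adj_cycle_square_iff:
  "adj (cycle_square m) u v \<longleftrightarrow> u < m \<and> v < m \<and> (\<exists>d\<in>{1, 2}. v = (u + d) mod m \<or> u = (v + d) mod m)"
proof
  assume "adj (cycle_square m) u v"
  then obtain a d where "{u, v} = {a, (a + d) mod m}" "a < m" "d \<in> {1, 2 :: nat}"
    unfolding adj_def cycle_square_def by auto
  then show "u < m \<and> v < m \<and> (\<exists>d\<in>{1, 2}. v = (u + d) mod m \<or> u = (v + d) mod m)"
    by (auto simp: doubleton_eq_iff)
next
  assume "u < m \<and> v < m \<and> (\<exists>d\<in>{1, 2}. v = (u + d) mod m \<or> u = (v + d) mod m)"
  then obtain d where uv: "u < m" "v < m" and d: "d \<in> {1, 2 :: nat}"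
    and "v = (u + d) mod m \<or> u = (v + d) mod m" by blast
  with cycle_square_edge[OF uv(1) d] cycle_square_edge[OF uv(2) d]
  show "adj (cycle_square m) u v" by (auto simp: adj_def insert_commute)
qed

lemma adj_cycle_square_Suc: "Suc i < m \<Longrightarrow> adj (cycle_square m) i (Suc i)"
  by (auto simp: adj_cycle_square_iff)

lemma cong_int_add_iff_mod: "v < m \<Longrightarrow> [int v = int u + int d] (mod int m) \<longleftrightarrow> v = (u + d) mod m"
  by (simp add: cong_def flip: of_nat_add zmod_int)

lemma cong_diff_iff_cong_add: "[a = b - c] (mod m) \<longleftrightarrow> [b = a + (c::int)] (mod m)"
  by (metis cong_iff_dvd_diff cong_sym_eq diff_diff_eq2)

text \<open>A constant rather than a set literal, so that the simplifier does not split offsets into cases.\<close>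

definition cycle_offsets :: "int set" where
  "cycle_offsets = {-2, -1, 1, 2}"

lemma adj_cycle_square_iff_cong:
  "adj (cycle_square m) u v \<longleftrightarrow>
    u < m \<and> v < m \<and> (\<exists>d\<in>cycle_offsets. [int v = int u + d] (mod int m))"
proof -
  have "(\<exists>d\<in>cycle_offsets. [int v = int u + d] (mod int m)) \<longleftrightarrow>
      (\<exists>d\<in>{1, 2 :: nat}. [int v = int u + int d] (mod int m) \<or> [int v = int u - int d] (mod int m))"
    by (auto simp: cycle_offsets_def numeral_eq_Suc)
  moreover have "[int v = int u - int d] (mod int m) \<longleftrightarrow> u = (v + d) mod m" if "u < m" for d
    using cong_int_add_iff_mod[OF that] by (simp add: cong_diff_iff_cong_add)
  ultimately show ?thesis
    unfolding adj_cycle_square_iff using cong_int_add_iff_mod by blast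
qed

lemma add_mod_ne_self:
  fixes a d m :: nat
  assumes "a < m" "0 < d" "d < m"
  shows "(a + d) mod m \<noteq> a"
proof (cases "a + d < m")
  case False
  then have "(a + d) mod m = a + d - m" using assms by (simp add: le_mod_geq)
  then show ?thesis using False assms by arith
qed (use assms in simp)

lemma is_graph_cycle_square: assumes "3 \<le> m" shows "is_graph (cycle_square m)"
  unfolding is_graph_def
proof (intro conjI ballI)
  show "finite (verts (cycle_square m))" "verts (cycle_square m) \<noteq> {}"
    using assms by (simp_all add: lessThan_empty_iff)
next
  fix e assume "e \<in> edges (cycle_square m)"
  then obtain a d where e: "e = {a, (a + d) mod m}" and a: "a < m" and d: "d \<in> {1, 2 :: nat}"
    by (auto simp: cycle_square_def)
  have "(a + d) mod m \<noteq> a" "(a + d) mod m < m"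
    using add_mod_ne_self[OF a, of d] a d assms by auto
  with e a show "\<exists>u v. u \<in> verts (cycle_square m) \<and> v \<in> verts (cycle_square m) \<and> u \<noteq> v \<and> e = {u, v}"
    by (intro exI[of _ a] exI[of _ "(a + d) mod m"]) simp
next
  fix u v assume "u \<in> verts (cycle_square m)" "v \<in> verts (cycle_square m)"
  then have uv: "u < m" "v < m" by simp_all
  have path: "walk (cycle_square m) [a..<Suc b]" if "a \<le> b" "b < m" for a b
    using that by (intro walk_upt) (auto intro: adj_cycle_square_Suc)
  show "\<exists>xs. walk (cycle_square m) xs \<and> hd xs = u \<and> last xs = v"
  proof (cases "u \<le> v")
    case True
    then show ?thesis using path[OF True uv(2)] by (intro exI[of _ "[u..<Suc v]"]) (simp del: upt_Suc add: hd_upt)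
  next
    case False
    then show ?thesis using walk_rev[OF path[of v u]] uv
      by (intro exI[of _ "rev [v..<Suc u]"]) (simp del: upt_Suc add: hd_rev last_rev hd_upt)
  qed
qed

lemma cycle_square_three_colorable: assumes "1 \<le> n" shows "cycle_square (3 * n) \<in> THREE_COLORABLE"
  unfolding THREE_COLORABLE_def GRAPH_def
proof (intro CollectI conjI exI[of _ "\<lambda>u. u mod 3"] ballI allI impI)
  show "is_graph (cycle_square (3 * n))" using assms by (intro is_graph_cycle_square) simp
  fix u v assume "{u, v} \<in> edges (cycle_square (3 * n))"
  then obtain a d where uv: "{u, v} = {a, (a + d) mod (3 * n)}" and d: "d \<in> {1, 2 :: nat}"
    by (auto simp: cycle_square_def)
  have "(a + d) mod (3 * n) mod 3 = (a + d) mod 3" by (simp add: mod_mod_cancel)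
  also have "\<dots> \<noteq> a mod 3" using d by (auto simp: mod_Suc split: if_splits)
  finally show "u mod 3 \<noteq> v mod 3" using uv by (auto simp: doubleton_eq_iff)
qed auto

text \<open>Along \<open>0, 1, \<dots>, 3k\<close> any three consecutive vertices form a triangle, so a 3-colouring is
  3-periodic there; but \<open>3k\<close> and \<open>0\<close> are adjacent.\<close>

lemma cycle_square_not_three_colorable: "cycle_square (3 * k + 1) \<notin> THREE_COLORABLE"
proof
  let ?m = "3 * k + 1"
  assume "cycle_square ?m \<in> THREE_COLORABLE"
  then obtain f :: "nat \<Rightarrow> nat" where colors: "\<forall>u\<in>verts (cycle_square ?m). f u \<in> {0, 1, 2}"
    and proper: "\<forall>u v. {u, v} \<in> edges (cycle_square ?m) \<longrightarrow> f u \<noteq> f v"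
    unfolding THREE_COLORABLE_def by blast
  have step: "f i \<noteq> f (i + d)" if "i + d < ?m" "d \<in> {1, 2}" for i d
    using proper cycle_square_edge[of i ?m d] that by simp
  have periodic: "f (i + 3) = f i" if "i + 3 < ?m" for i
  proof -
    have "f (i + j) \<in> {0, 1, 2}" if "j \<le> 3" for j using colors \<open>i + 3 < ?m\<close> that by simp
    from this[of 0] this[of 1] this[of 2] this[of 3] show ?thesis
      using that step[of i 1] step[of i 2] step[of "i + 1" 1] step[of "i + 1" 2] step[of "i + 2" 1]
      by (auto simp: add.assoc numeral_3_eq_3)
  qed
  have "f (3 * j) = f 0" if "3 * j < ?m" for j
    using that
  proof (induction j)
    case (Suc j)
    have "3 * Suc j = 3 * j + 3" by simp
    then have "f (3 * Suc j) = f (3 * j)" using Suc.prems by (simp only:) (rule periodic, simp)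
    with Suc show ?case by simp
  qed simp
  moreover have "f (3 * k) \<noteq> f 0" using proper cycle_square_edge[of "3 * k" ?m 1] by simp
  ultimately show False by simp
qed

section \<open>The triple cover of \<open>cycle_square n\<close>\<close>

lemma cong_int_mod_nat: "[int (x mod n) = int x] (mod int n)"
  by (simp add: cong_def flip: zmod_int)

lemma cycle_offset_cong_imp_eq:
  assumes "d \<in> cycle_offsets" "d' \<in> cycle_offsets" "[d = d'] (mod int n)" "5 \<le> n"
  shows "d = d'"
proof (rule ccontr)
  assume "d \<noteq> d'"
  then have "\<bar>int n\<bar> \<le> \<bar>d - d'\<bar>" using assms(3) by (intro dvd_imp_le_int) (auto simp: cong_iff_dvd_diff)
  then show False using assms by (auto simp: cycle_offsets_def)
qed

lemma covering_cycle_square_triple: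
  assumes "5 \<le> n"
  shows "covering (cycle_square n) (cycle_square (3 * n)) (\<lambda>x. x mod n)"
proof
  fix u assume "u \<in> verts (cycle_square (3 * n))"
  then have u: "u < 3 * n" by simp
  let ?NH = "{v \<in> verts (cycle_square (3 * n)). adj (cycle_square (3 * n)) u v}"
  let ?NG = "{w \<in> verts (cycle_square n). adj (cycle_square n) (u mod n) w}"
  have mod_n: "[a = b] (mod int n)" if "[a = b] (mod int (3 * n))" for a b
    using that by (rule cong_dvd_modulus) simp
  have "inj_on (\<lambda>x. x mod n) ?NH"
  proof
    fix x y assume "x \<in> ?NH" "y \<in> ?NH" and xy: "x mod n = y mod n"
    then obtain d d' where x: "x < 3 * n" "d \<in> cycle_offsets" "[int x = int u + d] (mod int (3 * n))"
      and y: "y < 3 * n" "d' \<in> cycle_offsets" "[int y = int u + d'] (mod int (3 * n))"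
      by (auto simp: adj_cycle_square_iff_cong)
    have "[int x = int y] (mod int n)"
      using cong_int_mod_nat[of x n] cong_int_mod_nat[of y n] xy by (metis cong_sym cong_trans)
    then have "[int u + d = int u + d'] (mod int n)"
      using mod_n[OF x(3)] mod_n[OF y(3)] by (metis cong_sym cong_trans)
    then have "d = d'" using x(2) y(2) assms by (intro cycle_offset_cong_imp_eq) (auto simp: cong_add_lcancel)
    then have "[int x = int y] (mod int (3 * n))" using x(3) y(3) by (metis cong_sym cong_trans)
    then show "x = y" using x(1) y(1) by (simp add: cong_def flip: zmod_int)
  qed
  moreover have "(\<lambda>x. x mod n) ` ?NH = ?NG"
  proof
    show "(\<lambda>x. x mod n) ` ?NH \<subseteq> ?NG"
    proof (rule image_subsetI)
      fix x assume "x \<in> ?NH"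
      then obtain d where "d \<in> cycle_offsets" "[int x = int u + d] (mod int (3 * n))"
        by (auto simp: adj_cycle_square_iff_cong)
      moreover have "[int (x mod n) = int (u mod n) + d] (mod int n)"
      proof -
        have "[int u + d = int (u mod n) + d] (mod int n)"
          using cong_sym[OF cong_int_mod_nat[of u n]] by (rule cong_add) simp
        with cong_int_mod_nat[of x n] mod_n[OF calculation(2)] show ?thesis
          by (metis cong_trans)
      qed
      ultimately show "x mod n \<in> ?NG" using assms by (auto simp: adj_cycle_square_iff_cong)
    qed
  next
    show "?NG \<subseteq> (\<lambda>x. x mod n) ` ?NH"
    proof
      fix w assume "w \<in> ?NG"
      then obtain d where w: "w < n" "d \<in> cycle_offsets" "[int w = int (u mod n) + d] (mod int n)"
        by (auto simp: adj_cycle_square_iff_cong)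
      define x where "x = nat ((int u + d) mod int (3 * n))"
      have x: "x < 3 * n" "[int x = int u + d] (mod int (3 * n))"
        using assms by (auto simp: x_def cong_def nat_less_iff)
      then have "x \<in> ?NH" using u w(2) by (auto simp: adj_cycle_square_iff_cong)
      moreover have "[int x = int w] (mod int n)"
        using mod_n[OF x(2)] w(3) cong_int_mod_nat[of u n] by (metis cong_add_rcancel cong_sym cong_trans)
      then have "x mod n = w" using w(1) by (simp add: cong_def flip: zmod_int)
      ultimately show "w \<in> (\<lambda>x. x mod n) ` ?NH" by blast
    qed
  qed
  ultimately show "bij_betw (\<lambda>x. x mod n) ?NH ?NG" by (simp add: bij_betw_def)
qed (use assms in auto)

lemma walk_cycle_square_displacement:
  "walk (cycle_square m) xs \<Longrightarrow>
    \<exists>t. \<bar>t\<bar> \<le> 2 * int (length xs - 1) \<and> [int (last xs) = int (hd xs) + t] (mod int m)"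
proof (induction xs rule: induct_list012)
  case 1 then show ?case by (simp add: walk_def)
next
  case (2 x) then show ?case by (intro exI[of _ 0]) simp
next
  case (3 x y zs)
  then obtain t where t: "\<bar>t\<bar> \<le> 2 * int (length zs)" "[int (last (y # zs)) = int y + t] (mod int m)"
    by (auto simp: walk_Cons_Cons)
  obtain d where d: "d \<in> cycle_offsets" "[int y = int x + d] (mod int m)"
    using "3.prems" by (auto simp: walk_Cons_Cons adj_cycle_square_iff_cong)
  have "[int (last (y # zs)) = int x + (d + t)] (mod int m)"
    using cong_add[OF d(2) cong_refl[of t]] t(2) by (metis add.assoc cong_trans)
  moreover have "\<bar>d + t\<bar> \<le> 2 * int (length (x # y # zs) - 1)" using d(1) t(1) by (auto simp: cycle_offsets_def)
  ultimately show ?case by auto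
qed

text \<open>Distinct vertices of one fibre differ by \<open>\<plusminus>n\<close> or \<open>\<plusminus>2n\<close>, so a displacement smaller than
  \<open>n\<close> cannot connect them modulo \<open>3n\<close>.\<close>

lemma cycle_square_fibre_displacement:
  assumes "u < 3 * n" "v < 3 * n" "u \<noteq> v" "u mod n = v mod n" "[int v = int u + t] (mod int (3 * n))"
  shows "int n \<le> \<bar>t\<bar>"
proof (rule ccontr)
  assume small: "\<not> int n \<le> \<bar>t\<bar>"
  obtain q where q: "int v - int u = int n * q" "q \<in> {-2, -1, 1, 2}"
  proof
    have "v + n * (u div n) = u + n * (v div n)"
      using mult_div_mod_eq[of n u] mult_div_mod_eq[of n v] assms(4) by linarith
    then have "int v + int n * int (u div n) = int u + int n * int (v div n)"
      by (metis of_nat_add of_nat_mult)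
    then show "int v - int u = int n * (int (v div n) - int (u div n))"
      by (simp add: right_diff_distrib)
    have "u div n < 3" "v div n < 3" "u div n \<noteq> v div n"
      using assms(1-4) div_mult_mod_eq[of u n] div_mult_mod_eq[of v n] by (auto simp: less_mult_imp_div_less)
    then show "int (v div n) - int (u div n) \<in> {-2, -1, 1, 2}" by auto
  qed
  have "int (3 * n) dvd int n * q - t" using assms(5) q(1) by (simp add: cong_iff_dvd_diff algebra_simps)
  moreover from q(2) consider "q = -2" | "q = -1" | "q = 1" | "q = 2" by blast
  then have "int n * q - t \<noteq> 0" "\<bar>int n * q - t\<bar> < int (3 * n)"
    using small by (cases; simp add: abs_if; linarith)+
  ultimately show False using dvd_imp_le_int[of "int n * q - t" "int (3 * n)"] by simp
qed

lemma locally_unique_cycle_square_lift: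
  assumes "4 * r < n"
  shows "locally_unique (cycle_square (3 * n)) r (\<lambda>u. unary_id (u mod n))"
  unfolding locally_unique_def
proof (intro ballI impI notI)
  fix u v assume uv: "u \<in> verts (cycle_square (3 * n))" "v \<in> verts (cycle_square (3 * n))"
    and close: "u \<noteq> v \<and> dist_le (cycle_square (3 * n)) (2 * r) u v"
    and "unary_id (u mod n) = unary_id (v mod n)"
  then have same_fibre: "u mod n = v mod n" by simp
  obtain xs where xs: "walk (cycle_square (3 * n)) xs" "hd xs = u" "last xs = v" "length xs \<le> Suc (2 * r)"
    using close unfolding dist_le_def by blast
  obtain t where "\<bar>t\<bar> \<le> 2 * int (length xs - 1)" "[int v = int u + t] (mod int (3 * n))"
    using walk_cycle_square_displacement[OF xs(1)] xs(2,3) by blast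
  moreover have "int n \<le> \<bar>t\<bar>"
    using cycle_square_fibre_displacement uv close same_fibre calculation(2) by simp
  ultimately show False using xs(4) assms by linarith
qed

theorem corollary9p5:
  shows "NON_THREE_COLORABLE \<notin> NLP"
proof
  assume "NON_THREE_COLORABLE \<in> NLP"
  then obtain r_id where lift: "\<And>G H \<pi>. covering G H \<pi> \<Longrightarrow> is_graph G \<Longrightarrow> is_graph H \<Longrightarrow>
      G \<in> NON_THREE_COLORABLE \<Longrightarrow> locally_unique H r_id (\<lambda>u. unary_id (\<pi> u)) \<Longrightarrow>
      H \<in> NON_THREE_COLORABLE"
    by (rule NLP_closed_under_coverings) blast
  define n where "n = 3 * (2 * r_id + 2) + 1"
  have "5 \<le> n" "4 * r_id < n" by (simp_all add: n_def)
  have "is_graph (cycle_square n)" using \<open>5 \<le> n\<close> by (intro is_graph_cycle_square) simp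
  moreover have "cycle_square n \<notin> THREE_COLORABLE"
    unfolding n_def by (rule cycle_square_not_three_colorable)
  ultimately have G: "is_graph (cycle_square n)" "cycle_square n \<in> NON_THREE_COLORABLE"
    by (simp_all add: NON_THREE_COLORABLE_def GRAPH_def)
  have "is_graph (cycle_square (3 * n))" using \<open>5 \<le> n\<close> by (intro is_graph_cycle_square) simp
  then have "cycle_square (3 * n) \<in> NON_THREE_COLORABLE"
    using lift[OF covering_cycle_square_triple[OF \<open>5 \<le> n\<close>] G(1) _ G(2)]
      locally_unique_cycle_square_lift[OF \<open>4 * r_id < n\<close>] by blast
  moreover have "cycle_square (3 * n) \<in> THREE_COLORABLE"
    using \<open>5 \<le> n\<close> by (intro cycle_square_three_colorable) simp
  ultimately show False by (simp add: NON_THREE_COLORABLE_def)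
qed

end
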